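(* Let $\mathbf{F}\in[L^2(\mathbb{R}^2)]^2$ have compact support. Then $\mathbf{F}$ is uniquely determined by the multi-frequency far field data sets $$\mathcal{A}_p=\{u^\infty_{\mathbf{F},p}(\hat{\mathbf{x}},\omega):\ \hat{\mathbf{x}}\in\mathbb{S},\ \omega\in\mathbb{W}\}\quad\text{and}\quad \mathcal{A}_s=\{u^\infty_{\mathbf{F},s}(\hat{\mathbf{x}},\omega):\ \hat{\mathbf{x}}\in\mathbb{S},\ \omega\in\mathbb{W}\},$$ i.e., two compactly supported sources in $[L^2(\mathbb{R}^2)]^2$ having the same compressional and shear far field patterns for all $\hat{\mathbf{x}}\in\mathbb{S}$, $\omega\in\mathbb{W}$ coincide.
   Context: $\mathbb{W}=(\omega_{min},\omega_{max})$ with $0<\omega_{min}<\omega_{max}$; Lamé constants $\mu>0$, $2\mu+\lambda>0$; $k_p=\omega/\sqrt{\lambda+2\mu}$, $k_s=\omega/\sqrt\mu$. $\mathbb{S}$ is the unit circle and $\hat{\mathbf{x}}^\perp$ is $\hat{\mathbf{x}}$ rotated anticlockwise by $\pi/2$. The far field patterns of the source $\mathbf{F}$ (i.e., of the radiating solution of $\mu\Delta\mathbf{u}+(\lambda+\mu)\nabla\mathrm{div}\,\mathbf{u}+\omega^2\mathbf{u}=\mathbf{F}$) are $u^\infty_{\mathbf{F},p}(\hat{\mathbf{x}},\omega)=\int_{\mathbb{R}^2}e^{-ik_p\hat{\mathbf{x}}\cdot\mathbf{y}}\,\hat{\mathbf{x}}\cdot\mathbf{F}(\mathbf{y})\,d\mathbf{y}$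 and $u^\infty_{\mathbf{F},s}(\hat{\mathbf{x}},\omega)=\int_{\mathbb{R}^2}e^{-ik_s\hat{\mathbf{x}}\cdot\mathbf{y}}\,\hat{\mathbf{x}}^\perp\cdot\mathbf{F}(\mathbf{y})\,d\mathbf{y}$. *)

theory Defs
  imports "HOL-Analysis.Analysis"
begin

definition unit_circle :: "(real^2) set" where
  "unit_circle = {x. norm x = 1}"

definition perp :: "real^2 \<Rightarrow> real^2" where
  "perp x = (\<chi> i. if i = 1 then - (x $ 2) else x $ 1)"

text \<open>Real direction dotted with a complex vector (bilinear, no conjugation).\<close>
definition cdot :: "real^2 \<Rightarrow> complex^2 \<Rightarrow> complex" where
  "cdot d v = complex_of_real (d $ 1) * v $ 1 + complex_of_real (d $ 2) * v $ 2"

definition kp :: "real \<Rightarrow> real \<Rightarrow> real \<Rightarrow> real" where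
  "kp lam mu \<omega> = \<omega> / sqrt (lam + 2 * mu)"

definition ks :: "real \<Rightarrow> real \<Rightarrow> real" where
  "ks mu \<omega> = \<omega> / sqrt mu"

definition farfield_p :: "real \<Rightarrow> real \<Rightarrow> (real^2 \<Rightarrow> complex^2) \<Rightarrow> real^2 \<Rightarrow> real \<Rightarrow> complex" where
  "farfield_p lam mu F x \<omega> =
     (LINT y|lborel. exp (- \<i> * complex_of_real (kp lam mu \<omega> * (x \<bullet> y))) * cdot x (F y))"

definition farfield_s :: "real \<Rightarrow> real \<Rightarrow> (real^2 \<Rightarrow> complex^2) \<Rightarrow> real^2 \<Rightarrow> real \<Rightarrow> complex" where
  "farfield_s lam mu F x \<omega> =
     (LINT y|lborel. exp (- \<i> * complex_of_real (ks mu \<omega> * (x \<bullet> y))) * cdot (perp x) (F y))"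

definition L2_compact_source :: "(real^2 \<Rightarrow> complex^2) \<Rightarrow> bool" where
  "L2_compact_source F \<longleftrightarrow>
     F \<in> borel_measurable lborel \<and>
     integrable lborel (\<lambda>y. (norm (F y))^2) \<and>
     (\<exists>R. AE y in lborel. R < norm y \<longrightarrow> F y = 0)"

end

(*
  Writing ^ for the Fourier transform, the compressional and shear far field patterns in
  direction x at frequency omega are (x.F)^(k x) and (x_perp.F)^(k x), with k = k_p resp. k_s.
  Since F has compact support, t -> (x.F)^(t x) extends to an entire function of t, so its
  values for omega in the band W determine it for all real t; the same holds for x_perp.F.
  Knowing (x.F)^(t x) and (x_perp.F)^(t x) for all t and all unit x determines both
  components of F^ everywhere. Finally, a compactly supported integrable function whose
  Fourier transform vanishes is orthogonal to all trigonometric polynomials, hence by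
  Stone-Weierstrass to all continuous functions, hence to the indicators of boxes,
  and therefore vanishes almost everywhere.
*)

theory Submission
  imports Defs "HOL-Complex_Analysis.Conformal_Mappings"
begin

lemma integrable_mult_bounded:
  fixes g :: "'a \<Rightarrow> complex"
  assumes g: "integrable M g" and h: "h \<in> borel_measurable M"
    and bound: "AE y in M. g y \<noteq> 0 \<longrightarrow> norm (h y) \<le> B"
  shows "integrable M (\<lambda>y. h y * g y)"
proof (rule Bochner_Integration.integrable_bound)
  show "integrable M (\<lambda>y. B * norm (g y))"
    using g by auto
  show "(\<lambda>y. h y * g y) \<in> borel_measurable M"
    using g h by auto
  show "AE y in M. norm (h y * g y) \<le> norm (B * norm (g y))"
    using bound
  proof eventually_elim
    case (elim y)
    show ?case
    proof (cases "g y = 0")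
      case False
      with elim have "norm (h y) * norm (g y) \<le> B * norm (g y)"
        by (simp add: mult_right_mono)
      also have "\<dots> \<le> \<bar>B\<bar> * norm (g y)"
        by (simp add: mult_right_mono)
      finally show ?thesis
        by (simp add: norm_mult)
    qed simp
  qed
qed

lemma integral_norm_mult_le:
  fixes g :: "'a \<Rightarrow> complex"
  assumes g: "integrable M g" and h: "h \<in> borel_measurable M"
    and bound: "AE y in M. g y \<noteq> 0 \<longrightarrow> norm (h y) \<le> B"
  shows "(LINT y|M. norm (h y * g y)) \<le> B * (LINT y|M. norm (g y))"
proof -
  have "(LINT y|M. norm (h y * g y)) \<le> (LINT y|M. B * norm (g y))"
  proof (rule integral_mono_AE)
    show "integrable M (\<lambda>y. norm (h y * g y))"
      using integrable_mult_bounded[OF assms] by simp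
    show "AE y in M. norm (h y * g y) \<le> B * norm (g y)"
      using bound
    proof eventually_elim
      case (elim y)
      then show ?case
        by (cases "g y = 0") (simp_all add: norm_mult mult_right_mono)
    qed
  qed (use g in simp)
  then show ?thesis
    by simp
qed

lemma integrable_if_square_integrable_compact_support:
  fixes f :: "'a::euclidean_space \<Rightarrow> 'b::{banach, second_countable_topology}"
  assumes "f \<in> borel_measurable lborel" and "integrable lborel (\<lambda>y. (norm (f y))\<^sup>2)"
    and "AE y in lborel. R < norm y \<longrightarrow> f y = 0"
  shows "integrable lborel f"
proof (rule Bochner_Integration.integrable_bound)
  show "integrable lborel (\<lambda>y. indicator (cball 0 R) y + (norm (f y))\<^sup>2 :: real)"
    using assms(2) emeasure_bounded_finite[OF bounded_cball]
    by (intro Bochner_Integration.integrable_add integrable_real_indicator) auto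
  have le_square: "t \<le> 1 + t\<^sup>2" for t :: real
    using zero_le_power2[of "t - 1"] zero_le_power2[of t]
    unfolding power2_diff power_one mult_1_right by linarith
  show "AE y in lborel. norm (f y) \<le> norm (indicator (cball 0 R) y + (norm (f y))\<^sup>2 :: real)"
    using assms(3) by eventually_elim (auto simp: indicator_def le_square)
qed (use assms(1) in simp)

section \<open>The Fourier transform\<close>

definition fourier_transform :: "('a::euclidean_space \<Rightarrow> complex) \<Rightarrow> 'a \<Rightarrow> complex" where
  "fourier_transform g \<xi> = (LINT y|lborel. exp (- \<i> * complex_of_real (\<xi> \<bullet> y)) * g y)"

lemma integrable_fourier_integrand:
  fixes g :: "'a::euclidean_space \<Rightarrow> complex"
  assumes "integrable lborel g"
  shows "integrable lborel (\<lambda>y. exp (- \<i> * complex_of_real (\<xi> \<bullet> y)) * g y)"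
  by (rule integrable_mult_bounded[OF assms, where B=1]) (auto simp: norm_exp_eq_Re)

lemma fourier_transform_diff:
  fixes g h :: "'a::euclidean_space \<Rightarrow> complex"
  assumes "integrable lborel g" and "integrable lborel h"
  shows "fourier_transform (\<lambda>y. g y - h y) \<xi> = fourier_transform g \<xi> - fourier_transform h \<xi>"
  using integrable_fourier_integrand[OF assms(1)] integrable_fourier_integrand[OF assms(2)]
  by (simp add: fourier_transform_def right_diff_distrib)

section \<open>Analyticity along lines\<close>

lemma integral_exp_series:
  fixes g \<phi> :: "'a \<Rightarrow> complex"
  assumes g: "integrable M g" and \<phi>[measurable]: "\<phi> \<in> borel_measurable M"
    and bound: "AE y in M. g y \<noteq> 0 \<longrightarrow> norm (\<phi> y) \<le> K"
  shows "(\<lambda>n. LINT y|M. \<phi> y ^ n / fact n * g y) sums (LINT y|M. exp (\<phi> y) * g y)"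
proof -
  define f where "f = (\<lambda>n y. \<phi> y ^ n / fact n * g y)"
  have term_meas: "(\<lambda>y. \<phi> y ^ n / fact n) \<in> borel_measurable M" for n
    by measurable
  have term_bound: "AE y in M. g y \<noteq> 0 \<longrightarrow> norm (\<phi> y ^ n / fact n) \<le> K ^ n / fact n" for n
    using bound
    by eventually_elim (auto simp: norm_divide norm_power intro!: divide_right_mono power_mono)
  have f_int: "integrable M (f n)" for n
    unfolding f_def by (rule integrable_mult_bounded[OF g term_meas term_bound])
  have "summable (\<lambda>n. LINT y|M. norm (f n y))"
  proof (rule summable_comparison_test'[where N=0])
    show "summable (\<lambda>n. K ^ n / fact n * (LINT y|M. norm (g y)))"
      using summable_mult2[OF summable_exp[of K], of "LINT y|M. norm (g y)"]
      by (simp add: divide_inverse mult.commute)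
    show "norm (LINT y|M. norm (f n y)) \<le> K ^ n / fact n * (LINT y|M. norm (g y))" for n
      using integral_norm_mult_le[OF g term_meas term_bound]
      by (simp add: f_def abs_of_nonneg integral_nonneg_AE)
  qed
  moreover have "summable (\<lambda>n. norm (f n y))" for y
  proof -
    have "norm (f n y) = inverse (fact n) * norm (\<phi> y) ^ n * norm (g y)" for n
      by (simp add: f_def norm_mult norm_divide norm_power norm_fact field_simps)
    then show ?thesis
      using summable_mult2[OF summable_exp[of "norm (\<phi> y)"], of "norm (g y)"] by simp
  qed
  ultimately have "(\<lambda>n. integral\<^sup>L M (f n)) sums (LINT y|M. (\<Sum>n. f n y))"
    by (intro sums_integral f_int AE_I2)
  moreover have "(\<Sum>n. f n y) = exp (\<phi> y) * g y" for y
    using sums_mult2[OF exp_converges[of "\<phi> y"], of "g y"]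
    by (simp add: f_def sums_iff scaleR_conv_of_real divide_inverse mult.commute)
  ultimately have "(\<lambda>n. integral\<^sup>L M (f n)) sums (LINT y|M. exp (\<phi> y) * g y)"
    by simp
  then show ?thesis
    unfolding f_def .
qed

lemma integral_exp_power_series:
  fixes g \<phi> :: "'a \<Rightarrow> complex"
  assumes g: "integrable M g" and \<phi>: "\<phi> \<in> borel_measurable M"
    and bound: "AE y in M. g y \<noteq> 0 \<longrightarrow> norm (\<phi> y) \<le> K"
  shows "(\<lambda>n. (LINT y|M. \<phi> y ^ n / fact n * g y) * w ^ n) sums (LINT y|M. exp (w * \<phi> y) * g y)"
proof -
  have "AE y in M. g y \<noteq> 0 \<longrightarrow> norm (w * \<phi> y) \<le> norm w * K"
    using bound by eventually_elim (auto simp: norm_mult intro: mult_left_mono)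
  then have sums: "(\<lambda>n. LINT y|M. (w * \<phi> y) ^ n / fact n * g y)
      sums (LINT y|M. exp (w * \<phi> y) * g y)"
    using \<phi> by (intro integral_exp_series g) auto
  have "(\<lambda>y. (w * \<phi> y) ^ n / fact n * g y) = (\<lambda>y. \<phi> y ^ n / fact n * g y * w ^ n)" for n
    by (simp add: fun_eq_iff power_mult_distrib)
  then show ?thesis
    using sums by (simp only: integral_mult_left_zero)
qed

lemma fourier_transform_along_line_entire:
  fixes g :: "'a::euclidean_space \<Rightarrow> complex"
  assumes g: "integrable lborel g" and supp: "AE y in lborel. R < norm y \<longrightarrow> g y = 0"
  obtains \<Phi> where "\<Phi> holomorphic_on UNIV"
    and "\<And>t. \<Phi> (complex_of_real t) = fourier_transform g (t *\<^sub>R x)"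
proof
  define \<psi> where "\<psi> y = - \<i> * complex_of_real (x \<bullet> y)" for y
  define \<Phi> where "\<Phi> w = (LINT y|lborel. exp (w * \<psi> y) * g y)" for w
  have \<psi>_meas: "\<psi> \<in> borel_measurable lborel"
    unfolding \<psi>_def by measurable
  have \<psi>_bound: "AE y in lborel. g y \<noteq> 0 \<longrightarrow> norm (\<psi> y) \<le> norm x * R"
    using supp
  proof eventually_elim
    case (elim y)
    have "\<bar>x \<bullet> y\<bar> \<le> norm x * R" if "norm y \<le> R"
      by (rule order_trans[OF Cauchy_Schwarz_ineq2 mult_left_mono[OF that norm_ge_zero]])
    with elim show ?case
      by (auto simp: \<psi>_def norm_mult)
  qed
  show "\<Phi> holomorphic_on UNIV"
  proof (rule holomorphic_on_balls_imp_entire'[where c=0])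
    show "\<Phi> holomorphic_on ball 0 r" for r :: real
    proof (rule power_series_holomorphic)
      show "(\<lambda>n. (LINT y|lborel. \<psi> y ^ n / fact n * g y) * (w - 0) ^ n) sums \<Phi> w" for w
        using integral_exp_power_series[OF g \<psi>_meas \<psi>_bound, of w] by (simp add: \<Phi>_def)
    qed
  qed
  have "complex_of_real t * \<psi> y = - \<i> * complex_of_real ((t *\<^sub>R x) \<bullet> y)" for t y
    by (simp add: \<psi>_def mult.left_commute)
  then show "\<Phi> (complex_of_real t) = fourier_transform g (t *\<^sub>R x)" for t
    by (simp add: \<Phi>_def fourier_transform_def)
qed

lemma entire_eq_0_if_eq_0_on_interval:
  assumes f: "f holomorphic_on UNIV" and "a < b"
    and zero: "\<And>t. a < t \<Longrightarrow> t < b \<Longrightarrow> f (complex_of_real t) = 0"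
  shows "f z = 0"
proof (rule analytic_continuation[OF f open_UNIV connected_UNIV subset_UNIV UNIV_I])
  show "complex_of_real a islimpt complex_of_real ` {a<..<b}"
    by (intro islimpt_isCont_image islimpt_greaterThanLessThan1 \<open>a < b\<close>)
       (auto simp: eventually_at_filter)
qed (use zero in auto)

lemma fourier_transform_along_line_eq_0_if_eq_0_on_interval:
  fixes g :: "'a::euclidean_space \<Rightarrow> complex"
  assumes g: "integrable lborel g" and supp: "AE y in lborel. R < norm y \<longrightarrow> g y = 0"
    and "a < b" and zero: "\<And>s. a < s \<Longrightarrow> s < b \<Longrightarrow> fourier_transform g (s *\<^sub>R x) = 0"
  shows "fourier_transform g (t *\<^sub>R x) = 0"
proof -
  obtain \<Phi> where \<Phi>_entire: "\<Phi> holomorphic_on UNIV"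
    and \<Phi>: "\<And>t. \<Phi> (complex_of_real t) = fourier_transform g (t *\<^sub>R x)"
    using fourier_transform_along_line_entire[OF g supp] by blast
  have "\<Phi> (complex_of_real t) = 0"
    by (rule entire_eq_0_if_eq_0_on_interval[OF \<Phi>_entire \<open>a < b\<close>]) (simp add: \<Phi> zero)
  then show ?thesis
    by (simp add: \<Phi>)
qed

lemma fourier_transform_along_line_eq_0_if_frequency_band:
  fixes g :: "'a::euclidean_space \<Rightarrow> complex"
  assumes g: "integrable lborel g" and supp: "AE y in lborel. R < norm y \<longrightarrow> g y = 0"
    and "0 < c" and "\<omega>min < \<omega>max"
    and zero: "\<And>\<omega>. \<omega> \<in> {\<omega>min<..<\<omega>max} \<Longrightarrow> fourier_transform g ((\<omega> / c) *\<^sub>R x) = 0"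
  shows "fourier_transform g (t *\<^sub>R x) = 0"
proof (rule fourier_transform_along_line_eq_0_if_eq_0_on_interval[OF g supp])
  show "\<omega>min / c < \<omega>max / c"
    using assms(3,4) by (simp add: divide_strict_right_mono)
  fix s assume "\<omega>min / c < s" and "s < \<omega>max / c"
  then have "s * c \<in> {\<omega>min<..<\<omega>max}"
    using \<open>0 < c\<close> by (simp add: field_simps)
  then show "fourier_transform g (s *\<^sub>R x) = 0"
    using zero \<open>0 < c\<close> by fastforce
qed

section \<open>Uniqueness of the Fourier transform\<close>

inductive trig_poly :: "('a::real_inner \<Rightarrow> complex) \<Rightarrow> bool" where
  trig_poly_zero: "trig_poly (\<lambda>y. 0)"
| trig_poly_add_exp: "trig_poly p \<Longrightarrow> trig_poly (\<lambda>y. c * exp (\<i> * complex_of_real (\<xi> \<bullet> y)) + p y)"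

lemma trig_poly_const: "trig_poly (\<lambda>y. c)"
  using trig_poly_add_exp[OF trig_poly_zero, of c 0] by simp

lemma trig_poly_add:
  assumes "trig_poly p" and "trig_poly q"
  shows "trig_poly (\<lambda>y. p y + q y)"
  using assms(1)
proof induction
  case trig_poly_zero
  then show ?case
    using assms(2) by simp
next
  case (trig_poly_add_exp p c \<xi>)
  then show ?case
    using trig_poly.trig_poly_add_exp[of "\<lambda>y. p y + q y" c \<xi>] by (simp add: add.assoc)
qed

lemma trig_poly_exp_mult:
  assumes "trig_poly p"
  shows "trig_poly (\<lambda>y. c * exp (\<i> * complex_of_real (\<xi> \<bullet> y)) * p y)"
  using assms
proof induction
  case trig_poly_zero
  then show ?case
    by (simp add: trig_poly.trig_poly_zero)
next
  case (trig_poly_add_exp p d \<eta>)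
  have "(\<lambda>y. c * exp (\<i> * complex_of_real (\<xi> \<bullet> y)) * (d * exp (\<i> * complex_of_real (\<eta> \<bullet> y)) + p y))
      = (\<lambda>y. c * d * exp (\<i> * complex_of_real ((\<xi> + \<eta>) \<bullet> y))
             + c * exp (\<i> * complex_of_real (\<xi> \<bullet> y)) * p y)"
    by (simp add: fun_eq_iff inner_add_left distrib_left distrib_right exp_add mult_ac)
  then show ?case
    using trig_poly.trig_poly_add_exp[OF trig_poly_add_exp.IH] by simp
qed

lemma trig_poly_mult:
  assumes "trig_poly p" and "trig_poly q"
  shows "trig_poly (\<lambda>y. p y * q y)"
  using assms(1)
proof induction
  case trig_poly_zero
  then show ?case
    by (simp add: trig_poly.trig_poly_zero)
next
  case (trig_poly_add_exp p c \<xi>)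
  then show ?case
    using trig_poly_add[OF trig_poly_exp_mult[OF assms(2), of c \<xi>] trig_poly_add_exp.IH]
    by (simp add: distrib_right)
qed

lemma trig_poly_cos: "trig_poly (\<lambda>y. complex_of_real (cos (\<xi> \<bullet> y)))"
proof -
  have "complex_of_real (cos (\<xi> \<bullet> y))
      = 1/2 * exp (\<i> * complex_of_real (\<xi> \<bullet> y))
        + (1/2 * exp (\<i> * complex_of_real (- \<xi> \<bullet> y)) + 0)" for y
    by (simp add: cos_exp_eq add_divide_distrib flip: cos_of_real)
  then show ?thesis
    by (simp only: trig_poly.intros)
qed

lemma trig_poly_sin: "trig_poly (\<lambda>y. complex_of_real (sin (\<xi> \<bullet> y)))"
proof -
  have "complex_of_real (sin (\<xi> \<bullet> y))
      = - \<i>/2 * exp (\<i> * complex_of_real (\<xi> \<bullet> y))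
        + (\<i>/2 * exp (\<i> * complex_of_real (- \<xi> \<bullet> y)) + 0)" for y
    by (simp add: sin_exp_eq field_simps flip: sin_of_real)
  then show ?thesis
    by (simp only: trig_poly.intros)
qed

lemma continuous_on_trig_poly: "trig_poly p \<Longrightarrow> continuous_on UNIV p"
  by (induction rule: trig_poly.induct) (auto intro!: continuous_intros)

lemma trig_poly_bounded: "trig_poly p \<Longrightarrow> \<exists>B. \<forall>y. norm (p y) \<le> B"
proof (induction rule: trig_poly.induct)
  case (trig_poly_add_exp p c \<xi>)
  then obtain B where "\<And>y. norm (p y) \<le> B"
    by blast
  then have "norm (c * exp (\<i> * complex_of_real (\<xi> \<bullet> y)) + p y) \<le> norm c + B" for y
    by (smt (verit) norm_exp_i_times norm_mult norm_triangle_ineq mult_cancel_left1)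
  then show ?case
    by blast
qed auto

lemma integral_trig_poly_mult_eq_0:
  fixes g :: "'a::euclidean_space \<Rightarrow> complex"
  assumes g: "integrable lborel g" and ft: "\<And>\<xi>. fourier_transform g \<xi> = 0"
    and "trig_poly p"
  shows "(LINT y|lborel. p y * g y) = 0"
  using \<open>trig_poly p\<close>
proof induction
  case (trig_poly_add_exp p c \<xi>)
  obtain B where "\<And>y. norm (p y) \<le> B"
    using trig_poly_bounded[OF trig_poly_add_exp.hyps] by blast
  then have p_int: "integrable lborel (\<lambda>y. p y * g y)"
    using borel_measurable_continuous_onI[OF continuous_on_trig_poly[OF trig_poly_add_exp.hyps]]
    by (intro integrable_mult_bounded[OF g, of _ B] AE_I2) auto
  have "exp (\<i> * complex_of_real (\<xi> \<bullet> y)) = exp (- \<i> * complex_of_real (- \<xi> \<bullet> y))" for y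
    by simp
  then have "(LINT y|lborel. c * exp (\<i> * complex_of_real (\<xi> \<bullet> y)) * g y)
      = c * fourier_transform g (- \<xi>)"
    by (simp add: fourier_transform_def mult.assoc del: inner_minus_left)
  moreover have "integrable lborel (\<lambda>y. c * exp (\<i> * complex_of_real (\<xi> \<bullet> y)) * g y)"
    using integrable_fourier_integrand[OF g, of "- \<xi>"] by (simp add: mult.assoc)
  ultimately show ?case
    using p_int trig_poly_add_exp.IH ft by (simp add: distrib_right)
qed simp

lemma real_trig_poly_dense:
  fixes f :: "'a::real_inner \<Rightarrow> real"
  assumes "compact S" and "continuous_on S f" and "0 < e"
  obtains h where "trig_poly (\<lambda>y. complex_of_real (h y))" and "\<And>x. x \<in> S \<Longrightarrow> \<bar>f x - h x\<bar> < e"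
proof -
  let ?P = "\<lambda>h. trig_poly (\<lambda>y. complex_of_real (h y))"
  have "\<exists>h. ?P h \<and> (\<forall>x\<in>S. \<bar>f x - h x\<bar> < e)"
  proof (rule Stone_Weierstrass_HOL[OF assms(1) _ _ _ _ _ assms(2,3)])
    show "?P (\<lambda>x. c)" for c
      by (rule trig_poly_const)
    show "continuous_on S h" if "?P h" for h
      using continuous_on_Re[OF continuous_on_trig_poly[OF that]]
      by (auto intro: continuous_on_subset)
    show "?P (\<lambda>x. h1 x + h2 x)" if "?P h1 \<and> ?P h2" for h1 h2
      using trig_poly_add[of "\<lambda>y. complex_of_real (h1 y)" "\<lambda>y. complex_of_real (h2 y)"] that
      by simp
    show "?P (\<lambda>x. h1 x * h2 x)" if "?P h1 \<and> ?P h2" for h1 h2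
      using trig_poly_mult[of "\<lambda>y. complex_of_real (h1 y)" "\<lambda>y. complex_of_real (h2 y)"] that
      by simp
    show "\<exists>h. ?P h \<and> h x \<noteq> h y" if "x \<in> S \<and> y \<in> S \<and> x \<noteq> y" for x y
    proof (rule ccontr)
      assume no_sep: "\<not> (\<exists>h. ?P h \<and> h x \<noteq> h y)"
      define \<xi> where "\<xi> = (pi / 2 / (norm (x - y))\<^sup>2) *\<^sub>R (x - y)"
      have "\<xi> \<bullet> x - \<xi> \<bullet> y = \<xi> \<bullet> (x - y)"
        by (simp only: inner_diff_right)
      also have "\<dots> = pi / 2 / (norm (x - y))\<^sup>2 * ((x - y) \<bullet> (x - y))"
        by (simp add: \<xi>_def)
      also have "\<dots> = pi / 2"
        using that by (simp flip: power2_norm_eq_inner)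
      finally have diff: "\<xi> \<bullet> x - \<xi> \<bullet> y = pi / 2" .
      have sep: "h x = h y" if "?P h" for h
        using no_sep that by blast
      have "cos (\<xi> \<bullet> x - \<xi> \<bullet> y) = 1"
        using sep[OF trig_poly_cos[of \<xi>]] sep[OF trig_poly_sin[of \<xi>]]
        by (simp add: cos_diff flip: power2_eq_square)
      then show False
        unfolding diff by simp
    qed
  qed
  then show ?thesis
    using that by blast
qed

lemma norm_integral_continuous_mult_le:
  fixes g :: "'a::euclidean_space \<Rightarrow> complex"
  assumes g: "integrable lborel g" and supp: "AE y in lborel. R < norm y \<longrightarrow> g y = 0"
    and ft: "\<And>\<xi>. fourier_transform g \<xi> = 0" and f: "continuous_on UNIV f" and "0 < e"
  shows "norm (LINT y|lborel. f y *\<^sub>R g y) \<le> e * (LINT y|lborel. norm (g y))"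
proof -
  obtain h where h: "trig_poly (\<lambda>y. complex_of_real (h y))"
    and approx: "\<And>x. x \<in> cball 0 R \<Longrightarrow> \<bar>f x - h x\<bar> < e"
    using real_trig_poly_dense[OF compact_cball continuous_on_subset[OF f] \<open>0 < e\<close>] by blast
  have h_meas: "(\<lambda>y. complex_of_real (h y)) \<in> borel_measurable lborel"
    unfolding measurable_lborel2
    by (rule borel_measurable_continuous_onI[OF continuous_on_trig_poly[OF h]])
  have diff_meas: "(\<lambda>y. complex_of_real (f y - h y)) \<in> borel_measurable lborel"
    using h_meas borel_measurable_continuous_onI[OF f] by simp
  have diff_bound: "AE y in lborel. g y \<noteq> 0 \<longrightarrow> norm (complex_of_real (f y - h y)) \<le> e"
    using supp
  proof eventually_elim
    case (elim y)
    show ?case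
    proof
      assume "g y \<noteq> 0"
      with elim have "\<bar>f y - h y\<bar> < e"
        by (intro approx) auto
      then show "norm (complex_of_real (f y - h y)) \<le> e"
        unfolding norm_of_real by (rule less_imp_le)
    qed
  qed
  obtain B where "\<And>y. norm (complex_of_real (h y)) \<le> B"
    using trig_poly_bounded[OF h] by blast
  then have hg_int: "integrable lborel (\<lambda>y. complex_of_real (h y) * g y)"
    using h_meas by (intro integrable_mult_bounded[OF g, of _ B] AE_I2) auto
  have dg_int: "integrable lborel (\<lambda>y. complex_of_real (f y - h y) * g y)"
    by (rule integrable_mult_bounded[OF g diff_meas diff_bound])
  have "(LINT y|lborel. f y *\<^sub>R g y)
      = (LINT y|lborel. complex_of_real (f y - h y) * g y + complex_of_real (h y) * g y)"
    by (intro Bochner_Integration.integral_cong) (simp_all add: scaleR_conv_of_real algebra_simps)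
  also have "\<dots> = (LINT y|lborel. complex_of_real (f y - h y) * g y)
      + (LINT y|lborel. complex_of_real (h y) * g y)"
    by (rule Bochner_Integration.integral_add[OF dg_int hg_int])
  also have "\<dots> = (LINT y|lborel. complex_of_real (f y - h y) * g y)"
    using integral_trig_poly_mult_eq_0[OF g ft h] by simp
  also have "norm \<dots> \<le> (LINT y|lborel. norm (complex_of_real (f y - h y) * g y))"
    by (rule integral_norm_bound)
  also have "\<dots> \<le> e * (LINT y|lborel. norm (g y))"
    by (rule integral_norm_mult_le[OF g diff_meas diff_bound])
  finally show ?thesis .
qed

lemma integral_continuous_mult_eq_0:
  fixes g :: "'a::euclidean_space \<Rightarrow> complex"
  assumes g: "integrable lborel g" and supp: "AE y in lborel. R < norm y \<longrightarrow> g y = 0"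
    and ft: "\<And>\<xi>. fourier_transform g \<xi> = 0" and f: "continuous_on UNIV f"
  shows "(LINT y|lborel. f y *\<^sub>R g y) = 0"
proof -
  define C where "C = (LINT y|lborel. norm (g y))"
  have "C \<ge> 0"
    by (simp add: C_def)
  have "norm (LINT y|lborel. f y *\<^sub>R g y) \<le> 0 + e" if "0 < e" for e
  proof -
    have "0 < e / (C + 1)"
      using \<open>C \<ge> 0\<close> \<open>0 < e\<close> by simp
    then have "norm (LINT y|lborel. f y *\<^sub>R g y) \<le> e / (C + 1) * C"
      unfolding C_def by (rule norm_integral_continuous_mult_le[OF g supp ft f])
    also have "\<dots> \<le> e"
      using \<open>C \<ge> 0\<close> \<open>0 < e\<close> by (simp add: field_simps)
    finally show ?thesis
      by simp
  qed
  then show ?thesis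
    using field_le_epsilon[of "norm (LINT y|lborel. f y *\<^sub>R g y)" 0] by simp
qed

lemma continuous_approx_indicator_box:
  fixes a b :: "'a::euclidean_space"
  obtains s :: "nat \<Rightarrow> 'a \<Rightarrow> real"
  where "\<And>n. continuous_on UNIV (s n)" and "\<And>n y. \<bar>s n y\<bar> \<le> 1"
    and "\<And>y. (\<lambda>n. s n y) \<longlonglongrightarrow> indicator (box a b) y"
proof
  define C where "C = - box a b"
  have "closed C"
    by (simp add: C_def open_box closed_Compl)
  have "C \<noteq> {}"
    using bounded_box[of a b] not_bounded_UNIV by (metis C_def Compl_empty_eq double_complement)
  define s where "s n y = min 1 (real n * infdist y C)" for n y
  show "continuous_on UNIV (s n)" for n
    unfolding s_def by (intro continuous_intros continuous_on_infdist)
  show "\<bar>s n y\<bar> \<le> 1" for n y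
    using infdist_nonneg[of y C] by (simp add: s_def)
  show "(\<lambda>n. s n y) \<longlonglongrightarrow> indicator (box a b) y" for y
  proof (cases "y \<in> box a b")
    case True
    then have "0 < infdist y C"
      using infdist_pos_not_in_closed[OF \<open>closed C\<close> \<open>C \<noteq> {}\<close>] by (auto simp: C_def)
    moreover obtain N :: nat where "1 / infdist y C < real N"
      using reals_Archimedean2 by blast
    ultimately have "s n y = 1" if "N \<le> n" for n
      using that by (simp add: s_def field_simps order.strict_trans2)
    then show ?thesis
      using True by (intro tendsto_eventually eventually_sequentiallyI[of N]) simp
  next
    case False
    then show ?thesis
      by (simp add: s_def C_def infdist_zero)
  qed
qed

lemma set_integral_box_eq_0_if_integral_continuous_eq_0:
  fixes g :: "'a::euclidean_space \<Rightarrow> 'b::{banach, second_countable_topology}"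
  assumes g: "integrable lborel g"
    and orth: "\<And>f. continuous_on UNIV f \<Longrightarrow> (\<And>y. \<bar>f y\<bar> \<le> 1) \<Longrightarrow> (LINT y|lborel. f y *\<^sub>R g y) = 0"
  shows "(LINT y:box a b|lborel. g y) = 0"
proof -
  obtain s :: "nat \<Rightarrow> 'a \<Rightarrow> real"
    where s_cont: "\<And>n. continuous_on UNIV (s n)" and s_bound: "\<And>n y. \<bar>s n y\<bar> \<le> 1"
      and s_lim: "\<And>y. (\<lambda>n. s n y) \<longlonglongrightarrow> indicator (box a b) y"
    using continuous_approx_indicator_box[of a b] by blast
  have "(\<lambda>n. LINT y|lborel. s n y *\<^sub>R g y) \<longlonglongrightarrow> (LINT y|lborel. indicator (box a b) y *\<^sub>R g y)"
  proof (intro integral_dominated_convergence[where w="\<lambda>y. norm (g y)"] AE_I2)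
    have [measurable]: "s n \<in> borel_measurable borel" for n
      using s_cont by (rule borel_measurable_continuous_onI)
    have [measurable]: "g \<in> borel_measurable borel"
      using g by simp
    have [measurable]: "box a b \<in> sets borel"
      by (simp add: borel_open)
    show "(\<lambda>y. indicator (box a b) y *\<^sub>R g y) \<in> borel_measurable lborel"
      by measurable
    show "(\<lambda>y. s n y *\<^sub>R g y) \<in> borel_measurable lborel" for n
      by measurable
    show "norm (s n y *\<^sub>R g y) \<le> norm (g y)" for n y
      using s_bound[of n y] by (simp add: mult_left_le_one_le)
  qed (auto intro: tendsto_scaleR s_lim g)
  moreover have "(LINT y|lborel. s n y *\<^sub>R g y) = 0" for n
    using orth[OF s_cont s_bound] .
  ultimately have "(\<lambda>n. 0) \<longlonglongrightarrow> (LINT y:box a b|lborel. g y)"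
    by (simp add: set_lebesgue_integral_def)
  then show ?thesis
    by (rule LIMSEQ_unique[OF _ tendsto_const])
qed

lemma integral_eq_0_if_set_integral_box_eq_0:
  fixes g :: "'a::euclidean_space \<Rightarrow> 'b::{banach, second_countable_topology}"
  assumes g: "integrable lborel g" and box: "\<And>a b. (LINT y:box a b|lborel. g y) = 0"
  shows "(LINT y|lborel. g y) = 0"
proof -
  define Q where "Q n = box (- (real n *\<^sub>R One)) (real n *\<^sub>R One :: 'a)" for n
  have Q_meas: "Q n \<in> sets lborel" for n
    by (simp add: Q_def)
  have "incseq Q"
    unfolding incseq_def Q_def by (auto simp: subset_box intro!: mult_right_mono)
  have UN_Q: "(\<Union>n. Q n) = UNIV"
    unfolding Q_def by (rule UN_box_eq_UNIV)
  have "(\<lambda>n. LINT y:Q n|lborel. g y) \<longlonglongrightarrow> (LINT y:(\<Union>n. Q n)|lborel. g y)"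
    by (rule set_integral_cont_up[OF Q_meas \<open>incseq Q\<close>]) (simp add: UN_Q set_integrable_def g)
  moreover have "(LINT y:Q n|lborel. g y) = 0" for n
    by (simp add: Q_def box)
  ultimately have "(\<lambda>n. 0) \<longlonglongrightarrow> (LINT y|lborel. g y)"
    by (simp add: UN_Q set_lebesgue_integral_def)
  then show ?thesis
    by (rule LIMSEQ_unique[OF _ tendsto_const])
qed

lemma AE_eq_0_if_set_integral_box_eq_0:
  fixes g :: "'a::euclidean_space \<Rightarrow> 'b::{banach, second_countable_topology}"
  assumes g: "integrable lborel g" and box: "\<And>a b. (LINT y:box a b|lborel. g y) = 0"
  shows "AE y in lborel. g y = 0"
proof (rule sigma_finite_measure.density_zero[OF sigma_finite_lborel g])
  have g_set_int: "set_integrable lborel A g" if "A \<in> sets lborel" for A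
    using integrable_mult_indicator[OF that g] by (simp add: set_integrable_def)
  have integral_0: "(LINT y|lborel. g y) = 0"
    by (rule integral_eq_0_if_set_integral_box_eq_0[OF g box])
  let ?G = "range (\<lambda>(a, b). box a b :: 'a set)"
  have sets_eq: "sets lborel = sigma_sets UNIV ?G"
    by (simp add: borel_eq_box)
  fix A :: "'a set" assume "A \<in> sets lborel"
  have "Int_stable ?G"
    by (auto simp: Int_stable_def box_Int_box)
  moreover have "?G \<subseteq> Pow UNIV"
    by simp
  moreover have "A \<in> sigma_sets UNIV ?G"
    using \<open>A \<in> sets lborel\<close> sets_eq by simp
  ultimately show "(LINT y:A|lborel. g y) = 0"
  proof (induction rule: sigma_sets_induct_disjoint)
    case (basic A)
    then show ?case
      using box by auto
  next
    case empty
    then show ?case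
      by (simp add: set_lebesgue_integral_def)
  next
    case (compl A)
    then have "A \<in> sets lborel"
      using sets_eq by simp
    have "(LINT y:UNIV - A|lborel. g y) = (LINT y|lborel. g y - indicator A y *\<^sub>R g y)"
      unfolding set_lebesgue_integral_def
      by (intro Bochner_Integration.integral_cong) (auto simp: indicator_def)
    also have "\<dots> = 0"
      using g integrable_mult_indicator[OF \<open>A \<in> sets lborel\<close> g] compl.IH integral_0
      by (simp add: set_lebesgue_integral_def)
    finally show ?case .
  next
    case (union A)
    then have "A i \<in> sets lborel" for i
      using sets_eq by auto
    moreover have "(\<Union>i. A i) \<in> sets lborel"
      using calculation by auto
    ultimately show ?case
      using lebesgue_integral_countable_add[OF _ _ g_set_int] union.IH
        \<open>disjoint_family A\<close> by (simp add: disjoint_family_on_def)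
  qed
qed

lemma AE_eq_0_if_fourier_transform_eq_0:
  fixes g :: "'a::euclidean_space \<Rightarrow> complex"
  assumes "integrable lborel g" and "AE y in lborel. R < norm y \<longrightarrow> g y = 0"
    and "\<And>\<xi>. fourier_transform g \<xi> = 0"
  shows "AE y in lborel. g y = 0"
proof (rule AE_eq_0_if_set_integral_box_eq_0[OF assms(1)])
  show "(LINT y:box a b|lborel. g y) = 0" for a b
    by (rule set_integral_box_eq_0_if_integral_continuous_eq_0[OF assms(1)])
      (rule integral_continuous_mult_eq_0[OF assms])
qed

section \<open>Far field patterns\<close>

lemma bounded_linear_cdot: "bounded_linear (cdot d)"
  unfolding cdot_def
  by (intro bounded_linear_add
      bounded_linear_compose[OF bounded_linear_mult_right bounded_linear_vec_nth])

lemma fourier_transform_cdot: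
  fixes F :: "real^2 \<Rightarrow> complex^2"
  assumes "integrable lborel F"
  shows "fourier_transform (\<lambda>y. cdot d (F y)) \<xi> = cdot d (\<chi> j. fourier_transform (\<lambda>y. F y $ j) \<xi>)"
proof -
  have "integrable lborel (\<lambda>y. exp (- \<i> * complex_of_real (\<xi> \<bullet> y)) * (F y $ j))" for j
    by (intro integrable_fourier_integrand
        integrable_bounded_linear[OF bounded_linear_vec_nth assms])
  then show ?thesis
    by (simp add: fourier_transform_def cdot_def distrib_left mult.left_commute)
qed

lemma fourier_transform_cdot_diff:
  fixes F G :: "real^2 \<Rightarrow> complex^2"
  assumes "integrable lborel F" and "integrable lborel G"
  shows "fourier_transform (\<lambda>y. cdot d (F y - G y)) \<xi>
    = fourier_transform (\<lambda>y. cdot d (F y)) \<xi> - fourier_transform (\<lambda>y. cdot d (G y)) \<xi>"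
proof -
  have "cdot d (F y - G y) = cdot d (F y) - cdot d (G y)" for y
    by (simp add: cdot_def algebra_simps)
  then show ?thesis
    using fourier_transform_diff[OF integrable_bounded_linear[OF bounded_linear_cdot assms(1)]
        integrable_bounded_linear[OF bounded_linear_cdot assms(2)]]
    by simp
qed

lemma eq_0_if_cdot_eq_0_and_cdot_perp_eq_0:
  fixes v :: "complex^2"
  assumes "x \<in> unit_circle" and "cdot x v = 0" and "cdot (perp x) v = 0"
  shows "v = 0"
proof -
  have "(x $ 1)\<^sup>2 + (x $ 2)\<^sup>2 = 1"
    using assms(1) by (simp add: unit_circle_def norm_vec_def L2_set_def sum_2)
  then have unit: "(complex_of_real (x $ 1))\<^sup>2 + (complex_of_real (x $ 2))\<^sup>2 = 1"
    by (metis of_real_1 of_real_add of_real_power)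
  have "v $ 1 = 0" and "v $ 2 = 0"
    using assms(2,3) unit by (simp_all add: cdot_def perp_def) algebra+
  then show ?thesis
    by (simp add: vec_eq_iff forall_2)
qed

lemma farfield_p_eq_fourier_transform:
  "farfield_p lam mu F x \<omega> = fourier_transform (\<lambda>y. cdot x (F y)) (kp lam mu \<omega> *\<^sub>R x)"
  by (simp add: farfield_p_def fourier_transform_def)

lemma farfield_s_eq_fourier_transform:
  "farfield_s lam mu F x \<omega> = fourier_transform (\<lambda>y. cdot (perp x) (F y)) (ks mu \<omega> *\<^sub>R x)"
  by (simp add: farfield_s_def fourier_transform_def)

lemma fourier_transform_eq_0_if_longitudinal_and_transversal:
  fixes D :: "real^2 \<Rightarrow> complex^2"
  assumes D: "integrable lborel D"
    and p: "\<And>x t. x \<in> unit_circle \<Longrightarrow> fourier_transform (\<lambda>y. cdot x (D y)) (t *\<^sub>R x) = 0"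
    and s: "\<And>x t. x \<in> unit_circle \<Longrightarrow> fourier_transform (\<lambda>y. cdot (perp x) (D y)) (t *\<^sub>R x) = 0"
  shows "fourier_transform (\<lambda>y. D y $ j) \<xi> = 0"
proof -
  define x where "x = (if \<xi> = 0 then axis 1 1 else sgn \<xi>)"
  have x: "x \<in> unit_circle" and \<xi>: "\<xi> = norm \<xi> *\<^sub>R x"
    by (auto simp: x_def unit_circle_def norm_sgn sgn_div_norm)
  have "(\<chi> j. fourier_transform (\<lambda>y. D y $ j) \<xi>) = 0"
    using p[OF x, of "norm \<xi>"] s[OF x, of "norm \<xi>"]
    by (intro eq_0_if_cdot_eq_0_and_cdot_perp_eq_0[OF x])
      (simp_all add: fourier_transform_cdot[OF D] flip: \<xi>)
  then show ?thesis
    by (simp add: vec_eq_iff)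
qed

lemma AE_eq_0_if_longitudinal_and_transversal_band_data_eq_0:
  fixes D :: "real^2 \<Rightarrow> complex^2"
  assumes D: "integrable lborel D" and supp: "AE y in lborel. R < norm y \<longrightarrow> D y = 0"
    and "0 < cp" and "0 < cs" and "\<omega>min < \<omega>max"
    and p: "\<And>x \<omega>. x \<in> unit_circle \<Longrightarrow> \<omega> \<in> {\<omega>min<..<\<omega>max} \<Longrightarrow>
      fourier_transform (\<lambda>y. cdot x (D y)) ((\<omega> / cp) *\<^sub>R x) = 0"
    and s: "\<And>x \<omega>. x \<in> unit_circle \<Longrightarrow> \<omega> \<in> {\<omega>min<..<\<omega>max} \<Longrightarrow>
      fourier_transform (\<lambda>y. cdot (perp x) (D y)) ((\<omega> / cs) *\<^sub>R x) = 0"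
  shows "AE y in lborel. D y = 0"
proof -
  have cdot_D: "integrable lborel (\<lambda>y. cdot d (D y))"
    "AE y in lborel. R < norm y \<longrightarrow> cdot d (D y) = 0" for d
    using integrable_bounded_linear[OF bounded_linear_cdot D] supp by (auto simp: cdot_def)
  have "fourier_transform (\<lambda>y. D y $ j) \<xi> = 0" for j \<xi>
  proof (rule fourier_transform_eq_0_if_longitudinal_and_transversal[OF D])
    show "fourier_transform (\<lambda>y. cdot x (D y)) (t *\<^sub>R x) = 0" if "x \<in> unit_circle" for x t
      using p[OF that]
      by (rule fourier_transform_along_line_eq_0_if_frequency_band
          [OF cdot_D \<open>0 < cp\<close> \<open>\<omega>min < \<omega>max\<close>])
    show "fourier_transform (\<lambda>y. cdot (perp x) (D y)) (t *\<^sub>R x) = 0" if "x \<in> unit_circle" for x t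
      using s[OF that]
      by (rule fourier_transform_along_line_eq_0_if_frequency_band
          [OF cdot_D \<open>0 < cs\<close> \<open>\<omega>min < \<omega>max\<close>])
  qed
  then have "AE y in lborel. D y $ j = 0" for j
    using integrable_bounded_linear[OF bounded_linear_vec_nth D] supp
    by (intro AE_eq_0_if_fourier_transform_eq_0[of _ R]) auto
  then have "AE y in lborel. \<forall>j\<in>UNIV. D y $ j = 0"
    by (subst AE_finite_all) auto
  then show ?thesis
    by eventually_elim (simp add: vec_eq_iff)
qed

lemma L2_compact_sourceE:
  assumes "L2_compact_source F"
  obtains R where "integrable lborel F" and "AE y in lborel. R < norm y \<longrightarrow> F y = 0"
  using assms integrable_if_square_integrable_compact_support
  unfolding L2_compact_source_def by blast

theorem theorem3p1:
  fixes lam mu \<omega>min \<omega>max :: real and F G :: "real^2 \<Rightarrow> complex^2"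
  assumes "mu > 0" and "2 * mu + lam > 0"
    and "0 < \<omega>min" and "\<omega>min < \<omega>max"
    and "L2_compact_source F" and "L2_compact_source G"
    and "\<forall>x\<in>unit_circle. \<forall>\<omega>\<in>{\<omega>min<..<\<omega>max}.
           farfield_p lam mu F x \<omega> = farfield_p lam mu G x \<omega>"
    and "\<forall>x\<in>unit_circle. \<forall>\<omega>\<in>{\<omega>min<..<\<omega>max}.
           farfield_s lam mu F x \<omega> = farfield_s lam mu G x \<omega>"
  shows "AE y in lborel. F y = G y"
proof -
  obtain RF where F: "integrable lborel F" "AE y in lborel. RF < norm y \<longrightarrow> F y = 0"
    by (rule L2_compact_sourceE[OF assms(5)])
  obtain RG where G: "integrable lborel G" "AE y in lborel. RG < norm y \<longrightarrow> G y = 0"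
    by (rule L2_compact_sourceE[OF assms(6)])
  have "AE y in lborel. F y - G y = 0"
  proof (rule AE_eq_0_if_longitudinal_and_transversal_band_data_eq_0
      [where R="max RF RG" and cp="sqrt (lam + 2 * mu)" and cs="sqrt mu"])
    show "integrable lborel (\<lambda>y. F y - G y)"
      using F(1) G(1) by simp
    show "AE y in lborel. max RF RG < norm y \<longrightarrow> F y - G y = 0"
      using F(2) G(2) by eventually_elim simp
    show "fourier_transform (\<lambda>y. cdot x (F y - G y)) ((\<omega> / sqrt (lam + 2 * mu)) *\<^sub>R x) = 0"
      if "x \<in> unit_circle" and "\<omega> \<in> {\<omega>min<..<\<omega>max}" for x \<omega>
      using assms(7) that
      by (simp add: fourier_transform_cdot_diff F(1) G(1) farfield_p_eq_fourier_transform
          flip: kp_def)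
    show "fourier_transform (\<lambda>y. cdot (perp x) (F y - G y)) ((\<omega> / sqrt mu) *\<^sub>R x) = 0"
      if "x \<in> unit_circle" and "\<omega> \<in> {\<omega>min<..<\<omega>max}" for x \<omega>
      using assms(8) that
      by (simp add: fourier_transform_cdot_diff F(1) G(1) farfield_s_eq_fourier_transform
          flip: ks_def)
  qed (use assms(1,2,4) in auto)
  then show ?thesis
    by eventually_elim simp
qed

end
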